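(* Let $R$ be an associative ring with identity and involution $*$, and let $a\in R^{\#}\cap R^{\dagger}$. Write $x=a(a^{\#})^*a^{\dagger}$ and $b=a^{\dagger}a^2$. Then the following are equivalent: (1) $a\in R^{SEP}$; (2) $x-b$ is a right $(-b)$-idempotent; (3) $x-b$ is a left $(-b)$-idempotent; (4) $b-x$ is a right $(-x)$-idempotent; (5) $b-x$ is a left $(-x)$-idempotent.
   Context: An involution on $R$ is a map $x\mapsto x^*$ with $(x^* )^*=x$, $(x+y)^*=x^*+y^*$, $(xy)^*=y^*x^*$. An element $a$ is Moore–Penrose invertible if there is $b$ with $aba=a$, $bab=b$, $(ab)^*=ab$, $(ba)^*=ba$; such $b$ is unique, denoted $a^{\dagger}$, and $R^{\dagger}$ is the set of such $a$. An element $a$ is group invertible if there is $b$ with $aba=a$, $bab=b$, $ab=ba$; such $b$ is unique, denoted $a^{\#}$, and $R^{\#}$ is the set of such $a$. For $a\in R^{\#}\cap R^{\dagger}$, $a$ is SEP if $a^*=a^{\dagger}=a^{\#}$; $R^{SEP}$ denotes the set of SEP elements. For $e,c\in R$, $e$ is a left $c$-idempotent if $e^2=ce$, and a right $c$-idempotent if $e^2=ec$. *)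

theory Defs
  imports Main
begin

definition involution :: "('a::ring_1 \<Rightarrow> 'a) \<Rightarrow> bool" where
  "involution s \<longleftrightarrow> (\<forall>x. s (s x) = x) \<and> (\<forall>x y. s (x + y) = s x + s y)
     \<and> (\<forall>x y. s (x * y) = s y * s x)"

definition is_mp_inverse :: "('a::ring_1 \<Rightarrow> 'a) \<Rightarrow> 'a \<Rightarrow> 'a \<Rightarrow> bool" where
  "is_mp_inverse s a b \<longleftrightarrow> a * b * a = a \<and> b * a * b = b \<and> s (a * b) = a * b \<and> s (b * a) = b * a"

definition mp_invertible :: "('a::ring_1 \<Rightarrow> 'a) \<Rightarrow> 'a \<Rightarrow> bool" where
  "mp_invertible s a \<longleftrightarrow> (\<exists>b. is_mp_inverse s a b)"

definition mp_inv :: "('a::ring_1 \<Rightarrow> 'a) \<Rightarrow> 'a \<Rightarrow> 'a" where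
  "mp_inv s a = (THE b. is_mp_inverse s a b)"

definition is_group_inverse :: "'a::ring_1 \<Rightarrow> 'a \<Rightarrow> bool" where
  "is_group_inverse a b \<longleftrightarrow> a * b * a = a \<and> b * a * b = b \<and> a * b = b * a"

definition group_invertible :: "'a::ring_1 \<Rightarrow> bool" where
  "group_invertible a \<longleftrightarrow> (\<exists>b. is_group_inverse a b)"

definition group_inv :: "'a::ring_1 \<Rightarrow> 'a" where
  "group_inv a = (THE b. is_group_inverse a b)"

definition SEP :: "('a::ring_1 \<Rightarrow> 'a) \<Rightarrow> 'a \<Rightarrow> bool" where
  "SEP s a \<longleftrightarrow> group_invertible a \<and> mp_invertible s a \<and>
     s a = mp_inv s a \<and> mp_inv s a = group_inv a"

definition left_c_idempotent :: "'a::ring_1 \<Rightarrow> 'a \<Rightarrow> bool" where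
  "left_c_idempotent c e \<longleftrightarrow> e * e = c * e"

definition right_c_idempotent :: "'a::ring_1 \<Rightarrow> 'a \<Rightarrow> bool" where
  "right_c_idempotent c e \<longleftrightarrow> e * e = e * c"

end

theory Submission
  imports Defs
begin

(* Write a^+ for the Moore-Penrose inverse and a^# for the group inverse. If a is SEP, then
   x = b = a and all four conditions hold trivially. Each c-idempotency condition expands to
   one of x^2 = bx, x^2 = xb, b^2 = xb, b^2 = bx. Conversely, x is a unit of the corner ring
   pRp, p = a a^+, with inverse a a^* a^+; cancelling it where needed turns each equation
   into p a^+ a^3 = a^+ a^3 or a^3 a^+ = a^2. Either one makes the spectral idempotent a^# a
   Hermitian, so a^# is also a Moore-Penrose inverse and a^+ = a^#. Then b = a, and a short
   cancellation reduces the equation to (a^#)^* = a, i.e. a^* = a^#. *)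

lemma mult_eq_extend_right:
  fixes x y z :: "'a::semigroup_mult"
  shows "x * y = z \<Longrightarrow> x * (y * w) = z * w"
  by (simp add: mult.assoc[symmetric])

lemma right_c_idempotent_neg_diff_iff:
  fixes e c :: "'a::ring_1"
  shows "right_c_idempotent (- c) (e - c) \<longleftrightarrow> e * e = c * e"
  unfolding right_c_idempotent_def by (simp add: algebra_simps)

lemma left_c_idempotent_neg_diff_iff:
  fixes e c :: "'a::ring_1"
  shows "left_c_idempotent (- c) (e - c) \<longleftrightarrow> e * e = e * c"
  unfolding left_c_idempotent_def by (simp add: algebra_simps)

lemma is_mp_inverse_unique:
  assumes "involution s" "is_mp_inverse s a b" "is_mp_inverse s a c"
  shows "b = c"
proof -
  have s_mult: "\<And>x y. s (x * y) = s y * s x"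
    using assms(1) unfolding involution_def by blast
  have b: "a * b * a = a" "b * a * b = b" "s (a * b) = a * b" "s (b * a) = b * a"
    and c: "a * c * a = a" "c * a * c = c" "s (a * c) = a * c" "s (c * a) = c * a"
    using assms(2,3) unfolding is_mp_inverse_def by auto
  have "a * c = s ((a * b) * (a * c))"
    using b(1) c(3) by (simp add: mult.assoc[symmetric])
  also have "\<dots> = a * c * (a * b)"
    using b(3) c(3) s_mult by simp
  finally have ac: "a * c = a * b"
    using c(1) by (simp add: mult.assoc[symmetric])
  have "c * a = s ((c * a) * (b * a))"
    using b(1) c(4) by (simp add: mult.assoc)
  also have "\<dots> = b * a * (c * a)"
    using b(4) c(4) s_mult by simp
  finally have ca: "c * a = b * a"
    using c(1) by (simp add: mult.assoc)
  have "b = b * a * c"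
    using b(2) ac by (metis mult.assoc)
  also have "\<dots> = c"
    using c(2) ca by simp
  finally show ?thesis .
qed

lemma mp_inv_eq:
  assumes "involution s" "is_mp_inverse s a b"
  shows "mp_inv s a = b"
  unfolding mp_inv_def using assms is_mp_inverse_unique by blast

lemma is_group_inverse_unique:
  assumes "is_group_inverse a b" "is_group_inverse a c"
  shows "b = c"
  using assms unfolding is_group_inverse_def by (metis mult.assoc)

lemma group_inv_eq:
  assumes "is_group_inverse a b"
  shows "group_inv a = b"
  unfolding group_inv_def using assms is_group_inverse_unique by blast

lemma SEP_iff:
  assumes "involution s" "is_mp_inverse s a m" "is_group_inverse a g"
  shows "SEP s a \<longleftrightarrow> s a = m \<and> m = g"
  using assms mp_inv_eq group_inv_eq
  unfolding SEP_def mp_invertible_def group_invertible_def by metis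

locale group_inverse_star =
  fixes s :: "'a::ring_1 \<Rightarrow> 'a" and a g :: 'a
  assumes involution: "involution s"
    and group_inverse: "is_group_inverse a g"
begin

lemma s_s [simp]: "s (s x) = x"
  and s_mult [simp]: "s (x * y) = s y * s x"
  using involution unfolding involution_def by blast+

lemma a_g_commute: "a * g = g * a"
  and g_a_a: "g * a * a = a"
  and g_a_g: "g * a * g = g"
  using group_inverse unfolding is_group_inverse_def by (metis mult.assoc)+

lemma star_a_g_commute: "s g * s a = s a * s g"
  and star_a_a_g: "s a * s a * s g = s a"
  and star_a_g_g: "s a * s g * s g = s g"
  using arg_cong[OF a_g_commute, of s] arg_cong[OF g_a_a, of s] arg_cong[OF g_a_g, of s]
  by (simp_all add: mult.assoc)

(* Simp keeps products right-associated (mult.assoc), so every law in the *_laws lists is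
   also used with an arbitrary right factor (mult_eq_extend_right) in order to fire inside longer products. *)
lemmas group_laws = a_g_commute g_a_a star_a_g_commute

lemmas group_absorb [simp] =
  group_laws[simplified mult.assoc] group_laws[THEN mult_eq_extend_right, simplified mult.assoc]

end

locale ep_element = group_inverse_star +
  assumes group_idempotent_hermitian: "s (g * a) = g * a"
begin

lemma star_a_star_g: "s a * s g = g * a"
  using group_idempotent_hermitian by simp

lemma g_a_star_g: "g * a * s g = s g"
  and star_g_g_a: "s g * g * a = s g"
  using star_a_star_g star_a_g_g star_a_g_commute by (metis mult.assoc)+

lemmas ep_laws = star_a_star_g g_a_star_g star_g_g_a

lemmas ep_absorb [simp] =
  ep_laws[simplified mult.assoc] ep_laws[THEN mult_eq_extend_right, simplified mult.assoc]

end

locale mp_and_group_inverse = group_inverse_star +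
  fixes m
  assumes mp_inverse: "is_mp_inverse s a m"
begin

lemma a_m_a: "a * m * a = a"
  and m_a_m: "m * a * m = m"
  and a_m_hermitian: "s m * s a = a * m"
  and m_a_hermitian: "s a * s m = m * a"
  using mp_inverse unfolding is_mp_inverse_def by auto

lemma star_a_a_m: "s a * a * m = s a"
  using arg_cong[OF a_m_a, of s] a_m_hermitian by (simp add: mult.assoc)

lemma m_a_star_a: "m * a * s a = s a"
  using arg_cong[OF a_m_a, of s] m_a_hermitian by (simp add: mult.assoc[symmetric])

lemma m_a_star_g: "m * a * s g = s g"
  using m_a_star_a star_a_g_g by (metis mult.assoc)

lemma star_g_a_m: "s g * a * m = s g"
proof -
  have "s g * s g * s a = s g"
    using star_a_g_commute star_a_g_g by (metis mult.assoc)
  then show ?thesis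
    using star_a_a_m by (metis mult.assoc)
qed

lemma star_a_star_g_m: "s a * s g * m = m"
proof -
  have "s a * s g * s a = s a"
    using star_a_g_commute star_a_a_g by (metis mult.assoc)
  then show ?thesis
    using m_a_m m_a_hermitian by (metis mult.assoc)
qed

lemmas mp_laws = a_m_a m_a_m m_a_star_a m_a_star_g star_g_a_m star_a_star_g_m

lemmas mp_absorb [simp] =
  mp_laws[simplified mult.assoc] mp_laws[THEN mult_eq_extend_right, simplified mult.assoc]

lemma mp_eq_group_inverse_if_hermitian:
  assumes "s (g * a) = g * a"
  shows "m = g"
proof -
  have "is_mp_inverse s a g"
    using assms group_inverse unfolding is_mp_inverse_def is_group_inverse_def by metis
  then show ?thesis
    using is_mp_inverse_unique involution mp_inverse by blast
qed

lemma ep_element_if_mp_eq_group_inverse: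
  assumes "m = g"
  shows "ep_element s a g"
  using assms m_a_hermitian by unfold_locales simp

lemma mp_eq_group_inverse_if_range:
  assumes "a * m * m = m"
  shows "m = g"
proof -
  have "g * a * m = m"
    using assms g_a_a by (metis mult.assoc)
  then have "m * a = g * a"
    using a_m_a by (metis mult.assoc)
  then have "s (g * a) = g * a"
    by (metis m_a_hermitian s_mult)
  then show ?thesis
    by (rule mp_eq_group_inverse_if_hermitian)
qed

lemma mp_eq_group_inverse_if_square:
  assumes "a * a * m = a"
  shows "m = g"
proof -
  have "g * a = a * m"
    using assms g_a_a by (metis mult.assoc)
  then have "s (g * a) = g * a"
    by (metis a_m_hermitian s_mult)
  then show ?thesis
    by (rule mp_eq_group_inverse_if_hermitian)
qed

lemma mp_eq_group_inverse_if_range_cube: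
  assumes "a * m * (m * a * a * a) = m * a * a * a"
  shows "m = g"
proof -
  have "a * m * (m * a * a * a) * (g * g * m) = m * a * a * a * (g * g * m)"
    using assms by simp
  then have "a * m * m = m"
    by (simp add: mult.assoc)
  then show ?thesis
    by (rule mp_eq_group_inverse_if_range)
qed

lemma mp_eq_group_inverse_if_square_cube:
  assumes "a * a * a * m = a * a"
  shows "m = g"
proof -
  have "g * (a * a * a * m) = g * (a * a)"
    using assms by simp
  then have "a * a * m = a"
    by (simp add: mult.assoc)
  then show ?thesis
    by (rule mp_eq_group_inverse_if_square)
qed

end

locale sep_criterion = mp_and_group_inverse +
  fixes x b
  assumes x_def: "x = a * s g * m"
    and b_def: "b = m * a * a"
begin

lemma x_absorb: "a * m * x = x" "x * (a * m) = x"
  by (simp_all add: x_def mult.assoc)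

lemma x_corner_inverse: "x * (a * s a * m) = a * m" "a * s a * m * x = a * m"
  by (simp_all add: x_def mult.assoc)

lemma conditions_if_sep:
  assumes "s a = m" "m = g"
  shows "x * x = b * x" "x * x = x * b" "b * b = x * b" "b * b = b * x"
proof -
  have "s g = a"
    using assms by (metis s_s)
  then have "x = a" "b = a"
    using assms by (simp_all add: x_def b_def mult.assoc)
  then show "x * x = b * x" "x * x = x * b" "b * b = x * b" "b * b = b * x"
    by simp_all
qed

lemma sep_if_x_sq_eq_b_x:
  assumes h: "x * x = b * x"
  shows "s a = m \<and> m = g"
proof -
  have "a * m * (m * a * a * a) = a * m * b * (x * (a * s a * m)) * a"
    unfolding x_corner_inverse by (simp add: b_def mult.assoc)
  also have "\<dots> = b * (x * (a * s a * m)) * a"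
    using h x_absorb by (metis mult.assoc)
  also have "\<dots> = m * a * a * a"
    unfolding x_corner_inverse by (simp add: b_def mult.assoc)
  finally have ep: "m = g"
    by (rule mp_eq_group_inverse_if_range_cube)
  then interpret ep_element s a g
    by (rule ep_element_if_mp_eq_group_inverse)
  have "g * (x * x) * (a * s a) = g * (b * x) * (a * s a)"
    using h by simp
  then have "s g = a"
    using ep by (simp add: x_def b_def mult.assoc)
  then show ?thesis
    using ep by auto
qed

lemma sep_if_x_sq_eq_x_b:
  assumes h: "x * x = x * b"
  shows "s a = m \<and> m = g"
proof -
  have "a * a * a * m = a * s a * s g * (a * s a * m * x) * b * (a * m)"
    unfolding x_corner_inverse by (simp add: b_def mult.assoc)
  also have "\<dots> = a * s a * s g * (a * s a * m * x) * b"
    using h x_absorb by (metis mult.assoc)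
  also have "\<dots> = a * a"
    unfolding x_corner_inverse by (simp add: b_def mult.assoc)
  finally have ep: "m = g"
    by (rule mp_eq_group_inverse_if_square_cube)
  then interpret ep_element s a g
    by (rule ep_element_if_mp_eq_group_inverse)
  have "s a * g * (x * x) * a = s a * g * (x * b) * a"
    using h by simp
  then have "s g = a"
    using ep by (simp add: x_def b_def mult.assoc)
  then show ?thesis
    using ep by auto
qed

lemma sep_if_b_sq_eq_x_b:
  assumes h: "b * b = x * b"
  shows "s a = m \<and> m = g"
proof -
  have "a * m * (m * a * a * a) = a * m * (b * b)"
    by (simp add: b_def mult.assoc)
  also have "\<dots> = b * b"
    using h x_absorb by (metis mult.assoc)
  also have "\<dots> = m * a * a * a"
    by (simp add: b_def mult.assoc)
  finally have ep: "m = g"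
    by (rule mp_eq_group_inverse_if_range_cube)
  then interpret ep_element s a g
    by (rule ep_element_if_mp_eq_group_inverse)
  have "g * (b * b) = g * (x * b)"
    using h by simp
  then have "s g = a"
    using ep by (simp add: x_def b_def mult.assoc)
  then show ?thesis
    using ep by auto
qed

lemma sep_if_b_sq_eq_b_x:
  assumes h: "b * b = b * x"
  shows "s a = m \<and> m = g"
proof -
  have "a * a * a * m = g * a * (b * b * (a * m))"
    by (simp add: b_def mult.assoc)
  also have "\<dots> = g * a * (b * b)"
    using h x_absorb by (metis mult.assoc)
  also have "\<dots> = a * a"
    by (simp add: b_def mult.assoc)
  finally have ep: "m = g"
    by (rule mp_eq_group_inverse_if_square_cube)
  then interpret ep_element s a g
    by (rule ep_element_if_mp_eq_group_inverse)
  have "g * (g * (b * b) * a) = g * (g * (b * x) * a)"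
    using h by simp
  then have "s g = a"
    using ep by (simp add: x_def b_def mult.assoc)
  then show ?thesis
    using ep by auto
qed

end

theorem theorem3p4:
  fixes s :: "'a::ring_1 \<Rightarrow> 'a" and a :: 'a
  assumes "involution s"
    and "group_invertible a" and "mp_invertible s a"
  defines "x \<equiv> a * s (group_inv a) * mp_inv s a"
    and "b \<equiv> mp_inv s a * a ^ 2"
  shows "(SEP s a \<longleftrightarrow> right_c_idempotent (- b) (x - b))
       \<and> (SEP s a \<longleftrightarrow> left_c_idempotent (- b) (x - b))
       \<and> (SEP s a \<longleftrightarrow> right_c_idempotent (- x) (b - x))
       \<and> (SEP s a \<longleftrightarrow> left_c_idempotent (- x) (b - x))"
proof -
  obtain m where m: "is_mp_inverse s a m"
    using assms(3) unfolding mp_invertible_def by blast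
  obtain g where g: "is_group_inverse a g"
    using assms(2) unfolding group_invertible_def by blast
  have "x = a * s g * m" "b = m * a * a"
    unfolding x_def b_def mp_inv_eq[OF assms(1) m] group_inv_eq[OF g]
    by (simp_all add: power2_eq_square mult.assoc)
  then interpret sep_criterion s a g m x b
    using assms(1) m g by unfold_locales
  have "SEP s a \<longleftrightarrow> s a = m \<and> m = g"
    using SEP_iff assms(1) m g by blast
  then show ?thesis
    unfolding right_c_idempotent_neg_diff_iff left_c_idempotent_neg_diff_iff
    using sep_if_x_sq_eq_b_x sep_if_x_sq_eq_x_b sep_if_b_sq_eq_x_b sep_if_b_sq_eq_b_x
      conditions_if_sep
    by blast
qed

end
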